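(* Let $q$ be a prime power and $f:\mathbb{F}_q\to\mathbb{F}_q$ be differentially $d$-uniform. Then \[\sum_{r=1}^{d} r(d+1-r)M_r(f)\geq d \qquad (1)\] and \[\sum_{r=1}^{d+1} r(d+2-r)M_r(f)\geq q+d. \qquad (2)\] Equality holds in (1) if and only if $N(f)=(d+1)q-d$ and $M_r(f)=0$ for all $r\geq d+2$. Equality holds in (2) if and only if $N(f)=(d+1)q-d$ and $M_r(f)=0$ for all $r>d+2$; in that case \[\sum_{r=1}^{d} r(d+1-r)M_r(f)=(d+2)M_{d+2}(f)+d.\]
   Context: A map $f:\mathbb{F}_q\to\mathbb{F}_q$ is called differentially $d$-uniform ($d$-uniform) if $d=\max_{a\neq 0,\,b\in\mathbb{F}_q}|\{x\in\mathbb{F}_q: f(x+a)-f(x)=b\}|$. For $r\geq 1$, $M_r(f)$ denotes the number of $y\in\mathbb{F}_q$ with exactly $r$ preimages under $f$. $N(f)$ denotes the number of pairs $(x,y)\in\mathbb{F}_q^2$ with $f(x)=f(y)$. *)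

theory Defs
  imports Main
begin

text \<open>The finite field F_q is modelled as a type of class finite field; q = CARD('a),
  which is automatically a prime power.\<close>

definition diff_count :: "('a::field \<Rightarrow> 'a) \<Rightarrow> 'a \<Rightarrow> 'a \<Rightarrow> nat" where
  "diff_count f a b = card {x. f (x + a) - f x = b}"

definition diff_uniform :: "('a::{finite,field} \<Rightarrow> 'a) \<Rightarrow> nat \<Rightarrow> bool" where
  "diff_uniform f d \<longleftrightarrow> d = Max {diff_count f a b | a b. a \<noteq> 0}"

definition M :: "nat \<Rightarrow> ('a::finite \<Rightarrow> 'b) \<Rightarrow> nat" where
  "M r f = card {y. card (f -` {y}) = r}"

definition N :: "('a::finite \<Rightarrow> 'b) \<Rightarrow> nat" where
  "N f = card {(x, y). f x = f y}"

end

theory Submission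
  imports Defs
begin

text \<open>Write \<open>c\<^sub>y\<close> for the number of preimages of \<open>y\<close> and \<open>w\<^sub>m(c) = c(m+1-c)\<close>, so that the
  two sums of the theorem are \<open>\<Sum>\<^sub>y w\<^sub>m(c\<^sub>y)\<close> for \<open>m = d\<close> and \<open>m = d+1\<close>.  Since
  \<open>w\<^sub>m(c) + c\<^sup>2 = (m+1)c + c(c-m-1)\<^sub>+\<close>, \<open>\<Sum>\<^sub>y c\<^sub>y = q\<close> and \<open>\<Sum>\<^sub>y c\<^sub>y\<^sup>2 = N(f)\<close>, one gets
  \<open>\<Sum>\<^sub>y w\<^sub>m(c\<^sub>y) + N(f) = (m+1)q + \<Sum>\<^sub>y c\<^sub>y(c\<^sub>y-m-1)\<^sub>+\<close>.  Counting the pairs with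
  \<open>f(x) = f(y)\<close> by their difference \<open>y - x\<close> shows \<open>N(f) \<le> q + (q-1)d\<close>.  Both inequalities follow,
  equality forcing the bound on \<open>N(f)\<close> to be attained and the excess terms to vanish.\<close>

lemma sum_mult_M:
  fixes f :: "'a::finite \<Rightarrow> 'b::finite"
  assumes "finite A"
  shows "(\<Sum>r\<in>A. g r * M r f) =
    (\<Sum>y\<in>UNIV. if card (f -` {y}) \<in> A then g (card (f -` {y})) else 0)"
proof -
  have "(\<Sum>r\<in>A. g r * M r f) = (\<Sum>r\<in>A. \<Sum>y\<in>UNIV. if card (f -` {y}) = r then g r else 0)"
    by (simp add: M_def sum.If_cases mult.commute)
  also have "\<dots> = (\<Sum>y\<in>UNIV. \<Sum>r\<in>A. if card (f -` {y}) = r then g r else 0)"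
    by (rule sum.swap)
  also have "\<dots> = (\<Sum>y\<in>UNIV. if card (f -` {y}) \<in> A then g (card (f -` {y})) else 0)"
    using assms by (simp add: sum.delta)
  finally show ?thesis .
qed

lemma sum_card_vimage_singleton:
  fixes f :: "'a::finite \<Rightarrow> 'b::finite"
  shows "(\<Sum>y\<in>UNIV. card (f -` {y})) = card (UNIV :: 'a set)"
  using card_UN_disjoint[of UNIV "\<lambda>y. f -` {y}"] by (auto simp: vimage_eq_UN[symmetric] disjoint_iff)

lemma N_eq_sum_square_card_vimage:
  fixes f :: "'a::finite \<Rightarrow> 'b::finite"
  shows "N f = (\<Sum>y\<in>UNIV. card (f -` {y}) ^ 2)"
proof -
  have "{(x, x'). f x = f x'} = (\<Union>y. f -` {y} \<times> f -` {y})" by auto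
  then show ?thesis
    by (simp add: N_def card_UN_disjoint card_cartesian_product power2_eq_square disjoint_iff)
qed

lemma N_eq_sum_card_shift_collisions:
  fixes f :: "'a::{finite,ab_group_add} \<Rightarrow> 'b"
  shows "N f = (\<Sum>a\<in>UNIV. card {x. f (x + a) = f x})"
proof -
  have "{(x, x'). f x = f x'} = (\<Union>a. (\<lambda>x. (x, x + a)) ` {x. f (x + a) = f x})"
    by (auto simp: image_iff) (metis add_diff_cancel_left' diff_add_cancel)
  moreover have "card ((\<lambda>x. (x, x + a)) ` {x. f (x + a) = f x}) = card {x. f (x + a) = f x}" for a
    by (rule card_image) (auto simp: inj_on_def)
  moreover have "(\<lambda>x. (x, x + a)) ` {x. f (x + a) = f x} \<inter> (\<lambda>x. (x, x + b)) ` {x. f (x + b) = f x} = {}"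
    if "a \<noteq> b" for a b
    using that by auto
  ultimately show ?thesis
    by (simp add: N_def card_UN_disjoint)
qed

lemma diff_count_le_if_diff_uniform:
  fixes f :: "'a::{finite,field} \<Rightarrow> 'a"
  assumes "diff_uniform f d" and "a \<noteq> 0"
  shows "diff_count f a b \<le> d"
proof -
  have "finite {diff_count f a b | a b. a \<noteq> 0}"
    by (rule finite_subset[of _ "range (case_prod (diff_count f))"]) auto
  then show ?thesis
    using assms by (auto simp: diff_uniform_def intro: Max_ge)
qed

lemma N_add_le_if_diff_uniform:
  fixes f :: "'a::{finite,field} \<Rightarrow> 'a"
  assumes "diff_uniform f d"
  shows "N f + d \<le> (d + 1) * card (UNIV :: 'a set)"
proof -
  let ?q = "card (UNIV :: 'a set)"
  have "N f = card {x. f (x + 0) = f x} + (\<Sum>a\<in>UNIV - {0}. card {x. f (x + a) = f x})"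
    by (simp add: N_eq_sum_card_shift_collisions sum.remove[of UNIV 0])
  also have "\<dots> \<le> ?q + (\<Sum>a\<in>(UNIV :: 'a set) - {0}. d)"
  proof (rule add_mono)
    show "card {x. f (x + 0) = f x} \<le> ?q"
      by (rule card_mono) auto
    show "(\<Sum>a\<in>UNIV - {0}. card {x. f (x + a) = f x}) \<le> (\<Sum>a\<in>(UNIV :: 'a set) - {0}. d)"
      using diff_count_le_if_diff_uniform[OF assms, of _ 0]
      by (intro sum_mono) (simp add: diff_count_def)
  qed
  also have "\<dots> = ?q + (?q - 1) * d"
    by simp
  finally have "N f \<le> ?q + (?q - 1) * d" .
  moreover obtain p where "?q = Suc p"
    using card_gt_0_iff[of "UNIV :: 'a set"] not0_implies_Suc by auto
  ultimately show ?thesis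
    by (simp add: mult.commute)
qed

definition excess :: "nat \<Rightarrow> nat \<Rightarrow> nat" where
  "excess m c = c * (c - (m + 1))"

lemma excess_eq_0_iff: "excess m c = 0 \<longleftrightarrow> c \<le> m + 1"
  by (auto simp: excess_def)

lemma weight_add_square:
  "(if c \<in> {1..m} then c * (m + 1 - c) else 0) + c ^ 2 = (m + 1) * c + excess m c"
proof (cases "c \<le> m")
  case True
  then have "c * (m + 1 - c) + c * c = c * (m + 1)"
    by (metis add_mult_distrib2 le_add_diff_inverse2 le_SucI Suc_eq_plus1)
  then show ?thesis
    using True by (cases "c = 0") (auto simp: excess_def power2_eq_square)
next
  case False
  then have "c * c = c * (m + 1) + c * (c - (m + 1))"
    by (metis add_mult_distrib2 le_add_diff_inverse not_less_eq_eq Suc_eq_plus1)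
  then show ?thesis
    using False by (auto simp: excess_def power2_eq_square mult.commute)
qed

lemma weighted_sum_M_add_N:
  fixes f :: "'a::finite \<Rightarrow> 'b::finite"
  shows "(\<Sum>r=1..m. r * (m + 1 - r) * M r f) + N f
    = (m + 1) * card (UNIV :: 'a set) + (\<Sum>y\<in>UNIV. excess m (card (f -` {y})))"
proof -
  let ?c = "\<lambda>y. card (f -` {y})"
  have "(\<Sum>r=1..m. r * (m + 1 - r) * M r f) + N f
      = (\<Sum>y\<in>UNIV. (if ?c y \<in> {1..m} then ?c y * (m + 1 - ?c y) else 0) + ?c y ^ 2)"
    unfolding sum_mult_M[OF finite_atLeastAtMost] N_eq_sum_square_card_vimage
    by (rule sum.distrib[symmetric])
  also have "\<dots> = (\<Sum>y\<in>UNIV. (m + 1) * ?c y + excess m (?c y))"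
    by (simp only: weight_add_square)
  also have "\<dots> = (m + 1) * card (UNIV :: 'a set) + (\<Sum>y\<in>UNIV. excess m (?c y))"
    by (simp add: sum.distrib sum_distrib_left[symmetric] sum_card_vimage_singleton)
  finally show ?thesis .
qed

lemma M_eq_0_iff:
  fixes f :: "'a::finite \<Rightarrow> 'b::finite"
  shows "M r f = 0 \<longleftrightarrow> (\<forall>y. card (f -` {y}) \<noteq> r)"
  by (auto simp: M_def)

lemma sum_excess_eq_0_iff:
  fixes f :: "'a::finite \<Rightarrow> 'b::finite"
  shows "(\<Sum>y\<in>UNIV. excess m (card (f -` {y}))) = 0 \<longleftrightarrow> (\<forall>r > m + 1. M r f = 0)"
proof -
  have "(\<Sum>y\<in>UNIV. excess m (card (f -` {y}))) = 0 \<longleftrightarrow> (\<forall>y. card (f -` {y}) \<le> m + 1)"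
    by (simp add: excess_eq_0_iff)
  also have "\<dots> \<longleftrightarrow> (\<forall>r > m + 1. M r f = 0)"
    unfolding M_eq_0_iff by (metis not_le)
  finally show ?thesis .
qed

lemma sum_excess_eq_if_M_vanish:
  fixes f :: "'a::finite \<Rightarrow> 'b::finite"
  assumes "\<forall>r > m + 2. M r f = 0"
  shows "(\<Sum>y\<in>UNIV. excess m (card (f -` {y}))) = (m + 2) * M (m + 2) f"
proof -
  have "excess m (card (f -` {y})) = 0" if "card (f -` {y}) \<notin> {m + 2}" for y
  proof -
    have "card (f -` {y}) \<le> m + 2"
      using assms unfolding M_eq_0_iff by (metis not_le)
    with that show ?thesis
      by (simp add: excess_eq_0_iff)
  qed
  then have "(\<Sum>y\<in>UNIV. excess m (card (f -` {y}))) = (\<Sum>r\<in>{m + 2}. excess m r * M r f)"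
    by (auto simp: sum_mult_M intro: sum.cong)
  then show ?thesis
    by (simp add: excess_def)
qed

lemma weighted_sum_M_eq_if_diff_uniform:
  fixes f :: "'a::{finite,field} \<Rightarrow> 'a"
  assumes "diff_uniform f d"
  shows "(\<Sum>r=1..d+k. r * (d + k + 1 - r) * M r f)
    = k * card (UNIV :: 'a set) + d + ((d + 1) * card (UNIV :: 'a set) - (N f + d))
      + (\<Sum>y\<in>UNIV. excess (d + k) (card (f -` {y})))"
  using weighted_sum_M_add_N[of "d + k" f] N_add_le_if_diff_uniform[OF assms]
  unfolding distrib_right by linarith

theorem theorem2p7:
  fixes f :: "'a::{finite,field} \<Rightarrow> 'a" and d :: nat
  assumes "diff_uniform f d"
  shows "(\<Sum>r=1..d. r * (d + 1 - r) * M r f) \<ge> d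
    \<and> (\<Sum>r=1..d+1. r * (d + 2 - r) * M r f) \<ge> card (UNIV :: 'a set) + d
    \<and> ((\<Sum>r=1..d. r * (d + 1 - r) * M r f) = d \<longleftrightarrow>
           (N f = (d + 1) * card (UNIV :: 'a set) - d \<and> (\<forall>r. r \<ge> d + 2 \<longrightarrow> M r f = 0)))
    \<and> ((\<Sum>r=1..d+1. r * (d + 2 - r) * M r f) = card (UNIV :: 'a set) + d \<longleftrightarrow>
           (N f = (d + 1) * card (UNIV :: 'a set) - d \<and> (\<forall>r. r > d + 2 \<longrightarrow> M r f = 0)))
    \<and> ((\<Sum>r=1..d+1. r * (d + 2 - r) * M r f) = card (UNIV :: 'a set) + d \<longrightarrow>
           (\<Sum>r=1..d. r * (d + 1 - r) * M r f) = (d + 2) * M (d + 2) f + d)"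
proof -
  let ?q = "card (UNIV :: 'a set)"
  let ?S\<^sub>1 = "\<Sum>r=1..d. r * (d + 1 - r) * M r f"
  let ?S\<^sub>2 = "\<Sum>r=1..d+1. r * (d + 2 - r) * M r f"
  let ?X\<^sub>1 = "\<Sum>y\<in>UNIV. excess d (card (f -` {y}))"
  let ?X\<^sub>2 = "\<Sum>y\<in>UNIV. excess (d + 1) (card (f -` {y}))"
  let ?D = "(d + 1) * ?q - (N f + d)"
  have S\<^sub>1: "?S\<^sub>1 = d + ?D + ?X\<^sub>1"
    using weighted_sum_M_eq_if_diff_uniform[OF assms, of 0] by simp
  have S\<^sub>2: "?S\<^sub>2 = ?q + d + ?D + ?X\<^sub>2"
    using weighted_sum_M_eq_if_diff_uniform[OF assms, of 1] by simp
  have D: "?D = 0 \<longleftrightarrow> N f = (d + 1) * ?q - d"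
    using N_add_le_if_diff_uniform[OF assms] by arith
  have X\<^sub>1: "?X\<^sub>1 = 0 \<longleftrightarrow> (\<forall>r. r \<ge> d + 2 \<longrightarrow> M r f = 0)"
    by (auto simp: sum_excess_eq_0_iff Suc_le_eq)
  have X\<^sub>2: "?X\<^sub>2 = 0 \<longleftrightarrow> (\<forall>r. r > d + 2 \<longrightarrow> M r f = 0)"
    using sum_excess_eq_0_iff[of "d + 1" f] by simp
  have "?X\<^sub>1 = (d + 2) * M (d + 2) f" if "?X\<^sub>2 = 0"
    using that X\<^sub>2 by (intro sum_excess_eq_if_M_vanish) auto
  then have "?S\<^sub>1 = (d + 2) * M (d + 2) f + d" if "?S\<^sub>2 = ?q + d"
    using that S\<^sub>1 S\<^sub>2 by simp
  then show ?thesis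
    unfolding D[symmetric] X\<^sub>1[symmetric] X\<^sub>2[symmetric] using S\<^sub>1 S\<^sub>2
    by (intro conjI; arith)
qed

end
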